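(* Let $n$ be a positive integer and $(\alpha,\beta)\in\{(0,0),(1,0),(1,1),(2,1),(3,1),(3,2),(4,2)\}$. Let \[ w_{n,\alpha,\beta}=b^{n+1}(ab)^n b^{2n+1+\alpha}a^{2n+1+\beta}. \] Then $S_d(w_{n,\alpha,\beta})\ge 3n+1+\left\lfloor\frac{\alpha+\beta}{3}\right\rfloor$.
   Context: A word is a finite word over the two-letter alphabet $\{a,b\}$, written multiplicatively (so $x^m$ is the concatenation of $m$ copies of $x$). A word $w=a_1\cdots a_n$ is a palindrome if $a_i=a_{n-i+1}$ for all $i\le n$, and an antipalindrome if $a_i\neq a_{n-i+1}$ for all $i\le n$. For a word $w$, $S_d(w)$ is the minimal number of letters of $w$ whose deletion from $w$ yields a palindrome or an antipalindrome. $\lfloor x\rfloor$ denotes the integer part of $x$. *)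

theory Defs
  imports Main "HOL-Library.Sublist"
begin

datatype letter = a | b

definition palindrome :: "letter list \<Rightarrow> bool" where
  "palindrome w \<longleftrightarrow> (\<forall>i<length w. w ! i = w ! (length w - 1 - i))"

definition antipalindrome :: "letter list \<Rightarrow> bool" where
  "antipalindrome w \<longleftrightarrow> (\<forall>i<length w. w ! i \<noteq> w ! (length w - 1 - i))"

definition wpow :: "letter list \<Rightarrow> nat \<Rightarrow> letter list" where
  "wpow x m = concat (replicate m x)"

definition S_d :: "letter list \<Rightarrow> nat" where
  "S_d w = (LEAST k. \<exists>v. subseq v w \<and> length w - length v = k \<and>
                         (palindrome v \<or> antipalindrome v))"

end

theory Submission
  imports Defs
begin

text \<open>Write the word as \<open>b\<^sup>n\<^sup>+\<^sup>1 (ab)\<^sup>n b\<^sup>A a\<^sup>B\<close> with \<open>A = 2n+1+\<alpha>\<close>, \<open>B = 2n+1+\<beta>\<close>.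
  A palindrome (antipalindrome) \<open>v\<close> satisfies \<open>map f (rev v) = v\<close> with \<open>f\<close> the identity (the
  letter swap), so each prefix of \<open>v\<close> is the reflection of the suffix of the same length; comparing
  letter counts of a prefix and a suffix therefore bounds the outer runs of \<open>v\<close> against each other.
  Combined with the fact that a subsequence of \<open>(ab)\<^sup>n\<close>, cut in two, has at most \<open>n\<close> letters
  among the \<open>b\<close>'s of its first part and the \<open>a\<close>'s of its second, this bounds palindromic
  subsequences by \<open>2n+1+A\<close> and antipalindromic ones by \<open>2B\<close>. For the seven admissible pairs
  \<open>(\<alpha>,\<beta>)\<close> both bounds are at most \<open>A + B - \<lfloor>(\<alpha>+\<beta>)/3\<rfloor>\<close>.\<close>

lemma count_list_replicate: "count_list (replicate k x) y = (if x = y then k else 0)"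
  by (induction k) auto

lemma count_list_le_of_subseq: "subseq xs ys \<Longrightarrow> count_list xs x \<le> count_list ys x"
  by (induction rule: list_emb.induct) auto

lemma length_eq_count_a_add_count_b: "length w = count_list w a + count_list w b"
proof (induction w)
  case (Cons x w)
  then show ?case by (cases x) auto
qed simp

lemma subseq_replicate:
  assumes "subseq xs (replicate k x)"
  shows "xs = replicate (length xs) x" and "length xs \<le> k"
proof -
  have "set xs \<subseteq> {x}" using assms by (auto elim: list_emb_set)
  then show "xs = replicate (length xs) x" by (auto intro: replicate_eqI)
  show "length xs \<le> k" using list_emb_length[OF assms] by simp
qed

lemma split_leading_run:
  obtains c Z where "xs = replicate c x @ Z" and "Z = [] \<or> hd Z \<noteq> x"
proof -
  have "takeWhile ((=) x) xs = replicate (length (takeWhile ((=) x) xs)) x"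
    by (rule replicate_length_same[symmetric]) (auto dest: set_takeWhileD)
  then have "xs = replicate (length (takeWhile ((=) x) xs)) x @ dropWhile ((=) x) xs"
    by (metis takeWhile_dropWhile_id)
  moreover have "dropWhile ((=) x) xs = [] \<or> hd (dropWhile ((=) x) xs) \<noteq> x"
    by (metis hd_dropWhile)
  ultimately show ?thesis by (rule that)
qed

lemma subseq_runs_around_wordE:
  assumes "subseq v (replicate P x @ W @ replicate R y @ replicate S z)"
  obtains p X r s where "v = replicate p x @ X @ replicate r y @ replicate s z"
    and "p \<le> P" and "subseq X W" and "r \<le> R" and "s \<le> S"
proof -
  obtain v1 v2 v3 v4 where v: "v = v1 @ v2 @ v3 @ v4" and "subseq v1 (replicate P x)"
    and "subseq v2 W" and "subseq v3 (replicate R y)" and "subseq v4 (replicate S z)"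
    using assms by (auto elim!: subseq_appendE)
  with subseq_replicate that show ?thesis by metis
qed

lemma wpow_ab_Suc: "wpow [a,b] (Suc n) = a # b # wpow [a,b] n"
  by (simp add: wpow_def)

lemma count_list_wpow_ab: "count_list (wpow [a,b] n) x = n"
proof (induction n)
  case (Suc n)
  then show ?case by (cases x) (simp_all add: wpow_ab_Suc)
qed (simp add: wpow_def)

lemma append_eq_wpow_ab_counts:
  assumes "W1 @ W2 = wpow [a,b] n"
  shows "count_list W1 b + count_list W2 a \<le> n \<and> count_list W1 a + count_list W2 b \<le> n + 1"
  using assms
proof (induction n arbitrary: W1 W2)
  case 0
  then show ?case by (simp add: wpow_def)
next
  case (Suc n)
  consider "W1 = []" | "W1 = [a]" | W1' where "W1 = a # b # W1'" "W1' @ W2 = wpow [a,b] n"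
    using Suc.prems by (auto simp: wpow_ab_Suc append_eq_Cons_conv)
  then show ?case
  proof cases
    case 1
    then show ?thesis using Suc.prems count_list_wpow_ab[of "Suc n"] by simp
  next
    case 2
    then show ?thesis using Suc.prems count_list_wpow_ab[of n] by (auto simp: wpow_ab_Suc)
  next
    case 3
    then show ?thesis using Suc.IH[of W1' W2] by simp
  qed
qed

lemma subseq_wpow_ab_counts:
  assumes "subseq (X1 @ X2) (wpow [a,b] n)"
  shows "count_list X1 b + count_list X2 a \<le> n" and "count_list X1 a + count_list X2 b \<le> n + 1"
proof -
  obtain W1 W2 where "wpow [a,b] n = W1 @ W2" and "subseq X1 W1" and "subseq X2 W2"
    using assms list_emb_appendD by blast
  then have X: "count_list X1 x \<le> count_list W1 x" "count_list X2 x \<le> count_list W2 x" for x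
    by (simp_all add: count_list_le_of_subseq)
  have "count_list W1 b + count_list W2 a \<le> n" "count_list W1 a + count_list W2 b \<le> n + 1"
    using append_eq_wpow_ab_counts \<open>wpow [a,b] n = W1 @ W2\<close> by simp_all
  then show "count_list X1 b + count_list X2 a \<le> n"
    and "count_list X1 a + count_list X2 b \<le> n + 1"
    using X[of a] X[of b] by linarith+
qed

lemma subseq_wpow_ab_count_le:
  "subseq X (wpow [a,b] n) \<Longrightarrow> count_list X x \<le> n"
  using count_list_le_of_subseq[of X "wpow [a,b] n" x] by (simp add: count_list_wpow_ab)

fun flip :: "letter \<Rightarrow> letter" where
  "flip a = b"
| "flip b = a"

lemma palindrome_rev_eq: "palindrome v \<Longrightarrow> rev v = v"
proof (rule nth_equalityI)
  fix i
  assume "palindrome v" and i: "i < length (rev v)"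
  then have "v ! i = v ! (length v - 1 - i)"
    unfolding palindrome_def length_rev by blast
  with i show "rev v ! i = v ! i"
    by (simp add: rev_nth)
qed simp

lemma antipalindrome_map_flip_rev_eq: "antipalindrome v \<Longrightarrow> map flip (rev v) = v"
proof (rule nth_equalityI)
  fix i
  assume "antipalindrome v" and i: "i < length (map flip (rev v))"
  then have "v ! i \<noteq> v ! (length v - 1 - i)"
    unfolding antipalindrome_def by auto
  moreover have "map flip (rev v) ! i = flip (v ! (length v - 1 - i))"
    using i by (simp add: rev_nth)
  ultimately show "map flip (rev v) ! i = v ! i"
    by (cases "v ! i"; cases "v ! (length v - 1 - i)") auto
qed simp

lemma suffix_shorter_than_prefix:
  assumes "map f (rev v) = v" and "v = U @ V" and "v = W @ T"
    and "count_list (map f (rev T)) x < count_list U x"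
  shows "length T < length U"
proof (rule ccontr)
  assume "\<not> length T < length U"
  have "U @ V = map f (rev T) @ map f (rev W)"
    using assms(1-3) by (metis map_append rev_append)
  with \<open>\<not> length T < length U\<close> have "U = take (length U) (map f (rev T))"
    by (simp add: append_eq_append_conv_if)
  then have "prefix U (map f (rev T))"
    by (metis take_is_prefix)
  then have "count_list U x \<le> count_list (map f (rev T)) x"
    by (intro count_list_le_of_subseq prefix_imp_subseq)
  with assms(4) show False by simp
qed

lemma rev_eq_trailing_run_le:
  assumes "rev v = v" and "v = replicate k x @ y # V" and "y \<noteq> x" and "v = W @ replicate r x"
  shows "r \<le> k"
proof -
  have "length (replicate r x) < length (replicate k x @ [y])"
  proof (rule suffix_shorter_than_prefix[where f = id and x = y])
    show "map id (rev v) = v" using assms(1) by simp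
    show "v = (replicate k x @ [y]) @ V" using assms(2) by simp
    show "v = W @ replicate r x" by (rule assms(4))
    show "count_list (map id (rev (replicate r x))) y < count_list (replicate k x @ [y]) y"
      using assms(3) by (simp add: count_list_replicate)
  qed
  then show ?thesis by simp
qed

lemma count_list_map_flip: "count_list (map flip w) (flip x) = count_list w x"
proof (induction w)
  case (Cons y w)
  then show ?case by (cases x; cases y) auto
qed simp

lemma palindrome_length_le_without_final_a:
  assumes pal: "rev v = v" and v: "v = replicate p b @ X @ replicate r b"
    and X: "subseq X (wpow [a,b] n)" and "p \<le> n + 1" and "r \<le> A" and "2*n + 1 \<le> A"
  shows "length v \<le> 2*n + 1 + A"
proof -
  obtain c Z where XZ: "X = replicate c b @ Z" and Z: "Z = [] \<or> hd Z \<noteq> b"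
    using split_leading_run .
  have len: "length v = p + count_list X a + count_list X b + r"
    using v length_eq_count_a_add_count_b[of X] by simp
  have "count_list X b \<le> n"
    using X by (rule subseq_wpow_ab_count_le)
  show ?thesis
  proof (cases Z)
    case Nil
    with XZ have "count_list X a = 0"
      by (simp add: count_list_replicate)
    with len \<open>count_list X b \<le> n\<close> assms show ?thesis by linarith
  next
    case (Cons z Z')
    with Z have "z = a" by (cases z) auto
    have "r \<le> p + c"
    proof (rule rev_eq_trailing_run_le[OF pal])
      show "v = replicate (p + c) b @ a # Z' @ replicate r b"
        using v XZ Cons \<open>z = a\<close> by (simp add: replicate_add)
      show "v = (replicate p b @ X) @ replicate r b" using v by simp
    qed simp
    moreover have "c + count_list Z a \<le> n"
      using subseq_wpow_ab_counts(1)[of "replicate c b" Z n] X XZ by (simp add: count_list_replicate)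
    moreover have "count_list X a = count_list Z a"
      using XZ by (simp add: count_list_replicate)
    ultimately show ?thesis
      using len \<open>count_list X b \<le> n\<close> assms by linarith
  qed
qed

lemma palindrome_length_le_runs_a_b_a:
  assumes pal: "rev v = v" and v: "v = X @ replicate r b @ replicate s a"
    and XZ: "X = replicate c a @ replicate d b @ a # Z" and X: "subseq X (wpow [a,b] n)"
    and "s \<le> c" and "c \<le> n" and "2*n + 1 \<le> A"
  shows "length v \<le> 2*n + 1 + A"
proof -
  have "length (replicate r b @ replicate s a) < length (replicate c a @ replicate d b @ [a])"
  proof (rule suffix_shorter_than_prefix[where f = id])
    show "map id (rev v) = v" using pal by simp
    show "v = (replicate c a @ replicate d b @ [a]) @ Z @ replicate r b @ replicate s a"
      using v XZ by simp
    show "v = X @ replicate r b @ replicate s a" by (rule v)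
    show "count_list (map id (rev (replicate r b @ replicate s a))) a
        < count_list (replicate c a @ replicate d b @ [a]) a"
      using \<open>s \<le> c\<close> by (simp add: count_list_replicate)
  qed
  then have "r + s \<le> c + d" by simp
  moreover have "d + count_list (a # Z) a \<le> n"
    using subseq_wpow_ab_counts(1)[of "replicate c a @ replicate d b" "a # Z" n] X XZ
    by (simp add: count_list_replicate)
  moreover have "length v = c + count_list (a # Z) a + count_list X b + r + s"
    using v XZ length_eq_count_a_add_count_b[of X] by (simp add: count_list_replicate)
  moreover have "count_list X b \<le> n"
    using X by (rule subseq_wpow_ab_count_le)
  ultimately show ?thesis
    using assms by linarith
qed

lemma palindrome_length_le_without_initial_b:
  assumes pal: "rev v = v" and v: "v = X @ replicate r b @ replicate s a"
    and X: "subseq X (wpow [a,b] n)" and "r \<le> A" and "s \<le> B"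
    and "2*n + 1 \<le> A" and "B \<le> n + 1 + A"
  shows "length v \<le> 2*n + 1 + A"
proof -
  obtain c Y where XY: "X = replicate c a @ Y" and Y: "Y = [] \<or> hd Y \<noteq> a"
    using split_leading_run .
  obtain d Z where YZ: "Y = replicate d b @ Z" and Z: "Z = [] \<or> hd Z \<noteq> b"
    using split_leading_run .
  have d0: "Z = []" if "d = 0"
    using Y Z YZ that by (cases Z; cases "hd Z") auto
  have "c \<le> n"
    using subseq_wpow_ab_count_le[OF X, of a] XY by (simp add: count_list_replicate)
  have "c + d \<le> n + 1"
    using subseq_wpow_ab_counts(2)[of "replicate c a" Y n] X XY YZ by (simp add: count_list_replicate)
  show ?thesis
  proof (cases "d = 0 \<and> r = 0")
    case True
    then have "v = replicate (c + s) a"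
      using v XY YZ d0 by (simp add: replicate_add)
    then show ?thesis
      using \<open>c \<le> n\<close> assms by simp
  next
    case False
    have "s \<le> c"
    proof (rule rev_eq_trailing_run_le[OF pal])
      show "v = replicate c a @ b # tl (replicate d b @ Z @ replicate r b @ replicate s a)"
        using False v XY YZ d0 by (cases d; cases r) auto
      show "v = (X @ replicate r b) @ replicate s a" using v by simp
    qed simp
    show ?thesis
    proof (cases Z)
      case Nil
      then have "length v = c + d + r + s"
        using v XY YZ by simp
      then show ?thesis
        using \<open>s \<le> c\<close> \<open>c \<le> n\<close> \<open>c + d \<le> n + 1\<close> assms by linarith
    next
      case (Cons z Z')
      with Z have "z = a" by (cases z) auto
      with XY YZ Cons have "X = replicate c a @ replicate d b @ a # Z'" by simp
      from palindrome_length_le_runs_a_b_a[OF pal v this X \<open>s \<le> c\<close> \<open>c \<le> n\<close>]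
      show ?thesis using \<open>2*n + 1 \<le> A\<close> .
    qed
  qed
qed

lemma palindrome_subseq_length_le:
  assumes "subseq v (replicate (n + 1) b @ wpow [a,b] n @ replicate A b @ replicate B a)"
    and "palindrome v" and "2*n + 1 \<le> A" and "B \<le> n + 1 + A"
  shows "length v \<le> 2*n + 1 + A"
proof -
  obtain p X r s where v: "v = replicate p b @ X @ replicate r b @ replicate s a"
    and "p \<le> n + 1" and X: "subseq X (wpow [a,b] n)" and "r \<le> A" and "s \<le> B"
    using assms(1) by (rule subseq_runs_around_wordE)
  have pal: "rev v = v"
    using assms(2) by (rule palindrome_rev_eq)
  consider "s = 0" | "p = 0" | "0 < p" and "0 < s" by blast
  then show ?thesis
  proof cases
    case 1
    with v have "v = replicate p b @ X @ replicate r b" by simp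
    from palindrome_length_le_without_final_a[OF pal this X] show ?thesis
      using assms \<open>p \<le> n + 1\<close> \<open>r \<le> A\<close> by blast
  next
    case 2
    with v have "v = X @ replicate r b @ replicate s a" by simp
    from palindrome_length_le_without_initial_b[OF pal this X] show ?thesis
      using assms \<open>r \<le> A\<close> \<open>s \<le> B\<close> by blast
  next
    case 3
    have "s \<le> 0"
    proof (rule rev_eq_trailing_run_le[OF pal])
      show "v = replicate 0 a @ b # replicate (p - 1) b @ X @ replicate r b @ replicate s a"
        using v \<open>0 < p\<close> by (cases p) auto
      show "v = (replicate p b @ X @ replicate r b) @ replicate s a" using v by simp
    qed simp
    with \<open>0 < s\<close> show ?thesis by simp
  qed
qed

lemma antipalindrome_subseq_length_le:
  assumes "subseq v (replicate (n + 1) b @ wpow [a,b] n @ replicate A b @ replicate B a)"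
    and "antipalindrome v" and "2*n + 1 \<le> B"
  shows "length v \<le> 2*B"
proof -
  obtain p X r s where v: "v = replicate p b @ X @ replicate r b @ replicate s a"
    and "p \<le> n + 1" and X: "subseq X (wpow [a,b] n)" and "s \<le> B"
    using assms(1) by (rule subseq_runs_around_wordE)
  have refl: "map flip (rev v) = v"
    using assms(2) by (rule antipalindrome_map_flip_rev_eq)
  then have "count_list v a = count_list v b"
    using count_list_map_flip[of "rev v" b] by simp
  then have len: "length v = 2 * (count_list X a + s)"
    using length_eq_count_a_add_count_b[of v] v by (simp add: count_list_replicate)
  obtain c Z where XZ: "X = replicate c b @ Z" and Z: "Z = [] \<or> hd Z \<noteq> b"
    using split_leading_run .
  show ?thesis
  proof (cases Z)
    case Nil
    with XZ len \<open>s \<le> B\<close> show ?thesis by (simp add: count_list_replicate)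
  next
    case (Cons z Z')
    with Z have "z = a" by (cases z) auto
    have "length (replicate s a) < length (replicate (p + c) b @ [a])"
    proof (rule suffix_shorter_than_prefix[where f = flip])
      show "map flip (rev v) = v" by (rule refl)
      show "v = (replicate (p + c) b @ [a]) @ Z' @ replicate r b @ replicate s a"
        using v XZ Cons \<open>z = a\<close> by (simp add: replicate_add)
      show "v = (replicate p b @ X @ replicate r b) @ replicate s a" using v by simp
      show "count_list (map flip (rev (replicate s a))) a < count_list (replicate (p + c) b @ [a]) a"
        by (simp add: count_list_replicate)
    qed
    then have "s \<le> p + c" by simp
    moreover have "c + count_list Z a \<le> n"
      using subseq_wpow_ab_counts(1)[of "replicate c b" Z n] X XZ by (simp add: count_list_replicate)
    moreover have "count_list X a = count_list Z a"
      using XZ by (simp add: count_list_replicate)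
    ultimately have "count_list X a + s \<le> 2*n + 1"
      using \<open>p \<le> n + 1\<close> by linarith
    with len assms(3) show ?thesis by arith
  qed
qed

lemma palindrome_or_antipalindrome_subseq_length_le:
  assumes "subseq v (replicate (n + 1) b @ wpow [a,b] n @ replicate A b @ replicate B a)"
    and "palindrome v \<or> antipalindrome v"
    and "2*n + 1 \<le> A" and "B \<le> n + 1 + A" and "2*n + 1 \<le> B"
  shows "length v \<le> max (2*n + 1 + A) (2*B)"
  using assms(2)
proof
  assume "palindrome v"
  then show ?thesis
    using palindrome_subseq_length_le[OF assms(1) _ assms(3,4)] by simp
next
  assume "antipalindrome v"
  then show ?thesis
    using antipalindrome_subseq_length_le[OF assms(1) _ assms(5)] by simp
qed

lemma length_wpow_ab: "length (wpow [a,b] n) = 2*n"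
  using length_eq_count_a_add_count_b[of "wpow [a,b] n"] by (simp add: count_list_wpow_ab)

lemma S_d_lower_bound:
  assumes "\<And>v. subseq v w \<Longrightarrow> palindrome v \<or> antipalindrome v \<Longrightarrow> length v \<le> L"
  shows "length w - L \<le> S_d w"
proof -
  let ?P = "\<lambda>k. \<exists>v. subseq v w \<and> length w - length v = k \<and> (palindrome v \<or> antipalindrome v)"
  have "?P (length w)"
    by (intro exI[of _ "[]"]) (simp add: palindrome_def)
  then have "?P (S_d w)"
    unfolding S_d_def by (rule LeastI)
  then obtain v where "subseq v w" and "length w - length v = S_d w"
    and "palindrome v \<or> antipalindrome v"
    by blast
  moreover from this assms have "length v \<le> L"
    by blast
  ultimately show ?thesis
    by linarith
qed

theorem lemma4:
  fixes n \<alpha> \<beta> :: nat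
  assumes "n \<ge> 1"
    and "(\<alpha>, \<beta>) \<in> {(0,0),(1,0),(1,1),(2,1),(3,1),(3,2),(4,2)}"
  shows "S_d (wpow [b] (n+1) @ wpow [a,b] n @ wpow [b] (2*n+1+\<alpha>) @ wpow [a] (2*n+1+\<beta>))
           \<ge> 3*n + 1 + (\<alpha> + \<beta>) div 3"
proof -
  define A where "A = 2*n + 1 + \<alpha>"
  define B where "B = 2*n + 1 + \<beta>"
  define q where "q = (\<alpha> + \<beta>) div 3"
  define w where "w = replicate (n + 1) b @ wpow [a,b] n @ replicate A b @ replicate B a"
  have "q \<le> \<beta>" and "\<beta> + q \<le> \<alpha>"
    using assms(2) unfolding q_def by auto
  then have AB: "2*n + 1 \<le> A" "B \<le> n + 1 + A" "2*n + 1 \<le> B"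
    and bound: "max (2*n + 1 + A) (2*B) \<le> A + B - q" and "q \<le> B"
    unfolding A_def B_def by simp_all
  have "length v \<le> A + B - q" if "subseq v w" and "palindrome v \<or> antipalindrome v" for v
    using palindrome_or_antipalindrome_subseq_length_le[OF that[unfolded w_def] AB] bound
    by (rule order_trans)
  then have "length w - (A + B - q) \<le> S_d w"
    by (rule S_d_lower_bound)
  moreover have "length w = 3*n + 1 + A + B"
    unfolding w_def by (simp add: length_wpow_ab)
  ultimately have "3*n + 1 + q \<le> S_d w"
    using \<open>q \<le> B\<close> by linarith
  moreover have "wpow [b] (n+1) @ wpow [a,b] n @ wpow [b] (2*n+1+\<alpha>) @ wpow [a] (2*n+1+\<beta>) = w"
    unfolding w_def A_def B_def by (simp add: wpow_def)
  ultimately show ?thesis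
    unfolding q_def by argo
qed

end
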